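(* Let $m, n, T$ be positive integers. For each $t \in \{1,\dots,T\}$ let $\mathcal{X}_t = \{ S_t \mid S_t \subseteq [0,1]^m,\ |S_t| = n \}$, and let $\mathcal{X} = \mathcal{X}_1 \times \mathcal{X}_2 \times \cdots \times \mathcal{X}_T$ be the set of point cloud sequences $S = (S_1, \dots, S_T)$ of length $T$. Equip $\mathcal{X}$ with the distance $d_{seq}(S, S') = \max_{t} d_H(S_t, S'_t)$, where $d_H$ is the Hausdorff distance between finite subsets of $[0,1]^m$ (with respect to the Euclidean distance). Suppose $f : \mathcal{X} \to \mathbb{R}$ is continuous with respect to $d_{seq}$, i.e. for every $\epsilon>0$ there is $\delta>0$ such that for all $S, S' \in \mathcal{X}$ with $d_{seq}(S,S') < \delta$ we have $|f(S) - f(S')| < \epsilon$. Then for every $\epsilon > 0$ there exist a positive integer $K$, a function $\zeta : [0,1]^m \times \{1,\dots,T\} \to \mathbb{R}^K$ that is continuous in its first argument, and a continuous function $\gamma : \mathbb{R}^K \to \mathbb{R}$ such that for every $S = (S_1,\dots,S_T) \in \mathcal{X}$, $$\left| f(S) - \gamma\Big( \underset{\mathbf{x} \in S_t,\ t \in \{1,\dots,T\}}{MAX} \{ \zeta(\mathbf{x}, t) \} \Big) \right| < \epsilon,$$ where $MAX$ denotes the element-wise (coordinate-wise) maximum of a finite set of vectors in $\mathbb{R}^K$.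
   Context: The Hausdorff distance between finite sets $A, B \subseteq [0,1]^m$ is $d_H(A,B) = \max\{\sup_{a\in A}\inf_{b\in B}\|a-b\|, \sup_{b\in B}\inf_{a\in A}\|a-b\|\}$. The maximum in the displayed formula is taken over all pairs $(\mathbf{x}, t)$ with $t \in \{1,\dots,T\}$ and $\mathbf{x}$ a point of the $t$-th frame $S_t$. *)

theory Defs
  imports "HOL-Analysis.Analysis"
begin

definition unit_cube :: "(real ^ 'm) set" where
  "unit_cube = {x. \<forall>i. 0 \<le> x $ i \<and> x $ i \<le> 1}"

definition hausdorff_dist :: "(real ^ 'm) set \<Rightarrow> (real ^ 'm) set \<Rightarrow> real" where
  "hausdorff_dist A B =
     max (Sup ((\<lambda>a. Inf ((\<lambda>b. dist a b) ` B)) ` A))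
         (Sup ((\<lambda>b. Inf ((\<lambda>a. dist a b) ` A)) ` B))"

text \<open>Point cloud sequences of length T with n points per frame; frames indexed by 1..T,
  and set to the empty set outside 1..T so that a sequence is a unique object.\<close>
definition pc_seqs :: "nat \<Rightarrow> nat \<Rightarrow> (nat \<Rightarrow> (real ^ 'm) set) set" where
  "pc_seqs n T = {S. (\<forall>t\<in>{1..T}. S t \<subseteq> unit_cube \<and> card (S t) = n)
                    \<and> (\<forall>t. t \<notin> {1..T} \<longrightarrow> S t = {})}"

definition d_seq :: "nat \<Rightarrow> (nat \<Rightarrow> (real ^ 'm) set) \<Rightarrow> (nat \<Rightarrow> (real ^ 'm) set) \<Rightarrow> real" where
  "d_seq T S S' = Max ((\<lambda>t. hausdorff_dist (S t) (S' t)) ` {1..T})"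

text \<open>Coordinatewise maximum of the finite set of vectors zeta(x,t), x in S_t, t in 1..T;
  vectors of R^K are represented as functions nat => real, coordinates k < K
  (coordinates k >= K are set to 0).\<close>
definition MAX_feat :: "nat \<Rightarrow> nat \<Rightarrow> (real ^ 'm \<Rightarrow> nat \<Rightarrow> (nat \<Rightarrow> real))
                        \<Rightarrow> (nat \<Rightarrow> (real ^ 'm) set) \<Rightarrow> (nat \<Rightarrow> real)" where
  "MAX_feat K T \<zeta> S = (\<lambda>k. if k < K then Max {\<zeta> x t k | x t. t \<in> {1..T} \<and> x \<in> S t} else 0)"

end

theory Submission
  imports Defs
begin

text \<open>Cover the unit cube by a finite \<open>h\<close>-net \<open>G\<close> and give every pair \<open>(c, t)\<close> of a net point
  and a frame the feature \<open>-min |x - c| 1\<close> on frame \<open>t\<close> and \<open>-1\<close> on all other frames. The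
  coordinatewise maximum of these features over a sequence \<open>S\<close> records, up to \<open>h\<close>, which net
  points lie within \<open>h\<close> of each frame \<open>S\<^sub>t\<close>; so sequences with close feature vectors are
  \<open>3 h\<close>-close in \<open>d_seq\<close>, and \<open>f\<close> factors approximately through the feature map \<open>\<Phi>\<close>. As
  \<open>\<Phi>\<close> takes values in a compact cube, \<open>f\<close> is bounded, and the McShane extension
  \<open>v \<mapsto> inf\<^sub>S (f S + L dist v (\<Phi> S))\<close> is a Lipschitz function \<open>\<gamma>\<close> with
  \<open>|f - \<gamma> \<circ> \<Phi>| \<le> \<epsilon>/2\<close>.\<close>

section \<open>Approximate factorisation through a map into a compact space\<close>

text \<open>\<open>dist\<close> on \<open>nat \<Rightarrow> real\<close> is the product metric of theory \<open>Function_Metric\<close>; it induces the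
  product topology in which the continuity of \<open>\<gamma>\<close> is stated.\<close>

lemma dist_fun_ge_coordinate:
  fixes x y :: "'a::countable \<Rightarrow> 'b::metric_space"
  shows "(1/2) ^ to_nat i * min (dist (x i) (y i)) 1 \<le> dist x y"
proof -
  have "summable (\<lambda>n. (1/2) ^ n * min (dist (x (from_nat n)) (y (from_nat n))) 1)"
    by (rule summable_comparison_test'[of "\<lambda>n. (1/2) ^ n"]) (auto simp: summable_geometric_iff)
  then have "(\<Sum>n\<in>{to_nat i}. (1/2) ^ n * min (dist (x (from_nat n)) (y (from_nat n))) 1) \<le> dist x y"
    unfolding dist_fun_def by (rule sum_le_suminf) auto
  then show ?thesis by simp
qed

lemma dist_fun_small_imp_coordinates_small:
  fixes I :: "'a::countable set"
  assumes "finite I" "0 < r" "r \<le> 1"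
  obtains \<eta> where "\<eta> > 0"
    "\<And>(x :: 'a \<Rightarrow> 'b::metric_space) y i. dist x y < \<eta> \<Longrightarrow> i \<in> I \<Longrightarrow> dist (x i) (y i) < r"
proof
  define N where "N = (\<Sum>i\<in>I. to_nat i)"
  show "(1/2) ^ N * r > 0" using assms by simp
  fix x y :: "'a \<Rightarrow> 'b" and i assume "dist x y < (1/2) ^ N * r" "i \<in> I"
  moreover have "(1/2) ^ N \<le> ((1/2) ^ to_nat i :: real)"
    using member_le_sum[of i I to_nat] \<open>i \<in> I\<close> \<open>finite I\<close> unfolding N_def by (intro power_decreasing) auto
  ultimately have "(1/2) ^ to_nat i * min (dist (x i) (y i)) 1 < (1/2) ^ to_nat i * r"
    using dist_fun_ge_coordinate[of i x y] \<open>r > 0\<close> by (smt (verit) mult_right_mono)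
  then show "dist (x i) (y i) < r" using \<open>r \<le> 1\<close> by (simp add: min_def split: if_splits)
qed

definition mcshane_extension :: "real \<Rightarrow> ('s \<Rightarrow> real) \<Rightarrow> ('s \<Rightarrow> 'v::metric_space) \<Rightarrow> 's set \<Rightarrow> 'v \<Rightarrow> real" where
  "mcshane_extension L f \<Phi> X v = (INF S\<in>X. f S + L * dist v (\<Phi> S))"

lemma mcshane_extension_lipschitz:
  fixes \<Phi> :: "'s \<Rightarrow> 'v::metric_space" and f :: "'s \<Rightarrow> real"
  assumes "X \<noteq> {}" "bdd_below (f ` X)" "L \<ge> 0"
  shows "L-lipschitz_on UNIV (mcshane_extension L f \<Phi> X)"
proof -
  have bdd: "bdd_below ((\<lambda>S. f S + L * dist v (\<Phi> S)) ` X)" for v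
  proof -
    obtain m where "\<forall>S\<in>X. m \<le> f S" using assms(2) by (auto simp: bdd_below_def)
    then show ?thesis using \<open>L \<ge> 0\<close> by (intro bdd_belowI2[of _ m]) (simp add: add_increasing2)
  qed
  have le: "mcshane_extension L f \<Phi> X v \<le> mcshane_extension L f \<Phi> X w + L * dist v w" for v w
  proof -
    have "mcshane_extension L f \<Phi> X v - L * dist v w \<le> f S + L * dist w (\<Phi> S)" if "S \<in> X" for S
    proof -
      have "mcshane_extension L f \<Phi> X v \<le> f S + L * dist v (\<Phi> S)"
        unfolding mcshane_extension_def by (rule cINF_lower[OF bdd that])
      also have "\<dots> \<le> f S + L * (dist v w + dist w (\<Phi> S))"
        using dist_triangle[of v "\<Phi> S" w] \<open>L \<ge> 0\<close> by (simp add: mult_left_mono)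
      finally show ?thesis by (simp add: algebra_simps)
    qed
    then have "mcshane_extension L f \<Phi> X v - L * dist v w \<le> mcshane_extension L f \<Phi> X w"
      unfolding mcshane_extension_def[of L f \<Phi> X w] using \<open>X \<noteq> {}\<close> by (intro cINF_greatest)
    then show ?thesis by simp
  qed
  show ?thesis
  proof (rule lipschitz_onI)
    fix v w :: 'v
    show "dist (mcshane_extension L f \<Phi> X v) (mcshane_extension L f \<Phi> X w) \<le> L * dist v w"
      using le[of v w] le[of w v] by (simp add: dist_real_def dist_commute abs_le_iff)
  qed (use \<open>L \<ge> 0\<close> in simp)
qed

text \<open>With slope \<open>2 B / \<eta>\<close>, points at distance at least \<open>\<eta>\<close> cannot push the infimum below
  \<open>f S\<^sub>0\<close>, while points closer than \<open>\<eta>\<close> lower it by at most \<open>e\<close>.\<close>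
lemma mcshane_extension_approx:
  fixes \<Phi> :: "'s \<Rightarrow> 'v::metric_space" and f :: "'s \<Rightarrow> real"
  assumes "S\<^sub>0 \<in> X" "\<forall>S\<in>X. \<bar>f S\<bar> \<le> B" "\<eta> > 0"
    and close: "\<And>S S'. S \<in> X \<Longrightarrow> S' \<in> X \<Longrightarrow> dist (\<Phi> S) (\<Phi> S') < \<eta> \<Longrightarrow> \<bar>f S - f S'\<bar> \<le> e"
  shows "\<bar>f S\<^sub>0 - mcshane_extension (2 * B / \<eta>) f \<Phi> X (\<Phi> S\<^sub>0)\<bar> \<le> e"
proof -
  define L where "L = 2 * B / \<eta>"
  have "B \<ge> 0" "e \<ge> 0" using assms(2)[rule_format, OF \<open>S\<^sub>0 \<in> X\<close>] close[OF assms(1,1)] \<open>\<eta> > 0\<close> by auto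
  then have "L \<ge> 0" using \<open>\<eta> > 0\<close> by (simp add: L_def)
  have bdd: "bdd_below ((\<lambda>S. f S + L * dist (\<Phi> S\<^sub>0) (\<Phi> S)) ` X)"
    using assms(2) \<open>L \<ge> 0\<close> by (intro bdd_belowI2[of _ "- B"]) (smt (verit) zero_le_dist mult_nonneg_nonneg)
  have "mcshane_extension L f \<Phi> X (\<Phi> S\<^sub>0) \<le> f S\<^sub>0 + L * dist (\<Phi> S\<^sub>0) (\<Phi> S\<^sub>0)"
    unfolding mcshane_extension_def by (rule cINF_lower[OF bdd \<open>S\<^sub>0 \<in> X\<close>])
  moreover have "f S\<^sub>0 - e \<le> mcshane_extension L f \<Phi> X (\<Phi> S\<^sub>0)"
    unfolding mcshane_extension_def using \<open>S\<^sub>0 \<in> X\<close>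
  proof (intro cINF_greatest)
    fix S assume "S \<in> X"
    show "f S\<^sub>0 - e \<le> f S + L * dist (\<Phi> S\<^sub>0) (\<Phi> S)"
    proof (cases "dist (\<Phi> S\<^sub>0) (\<Phi> S) < \<eta>")
      case True
      then show ?thesis using close[OF \<open>S\<^sub>0 \<in> X\<close> \<open>S \<in> X\<close>] \<open>L \<ge> 0\<close> by (smt (verit) zero_le_dist mult_nonneg_nonneg)
    next
      case False
      then have "2 * B \<le> L * dist (\<Phi> S\<^sub>0) (\<Phi> S)"
        using \<open>\<eta> > 0\<close> \<open>B \<ge> 0\<close> by (simp add: L_def field_simps mult_left_mono)
      moreover have "\<bar>f S\<bar> \<le> B" "\<bar>f S\<^sub>0\<bar> \<le> B" using assms(2) \<open>S \<in> X\<close> \<open>S\<^sub>0 \<in> X\<close> by auto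
      ultimately show ?thesis using \<open>e \<ge> 0\<close> by linarith
    qed
  qed auto
  ultimately show ?thesis by (simp add: L_def)
qed

lemma bounded_if_close_through_compact:
  fixes \<Phi> :: "'s \<Rightarrow> 'v::metric_space" and f :: "'s \<Rightarrow> real"
  assumes "compact C" "\<Phi> ` X \<subseteq> C" "\<eta> > 0"
    and close: "\<And>S S'. S \<in> X \<Longrightarrow> S' \<in> X \<Longrightarrow> dist (\<Phi> S) (\<Phi> S') < \<eta> \<Longrightarrow> \<bar>f S - f S'\<bar> \<le> e"
  obtains B where "\<forall>S\<in>X. \<bar>f S\<bar> \<le> B"
proof -
  obtain Z where "finite Z" and cover: "C \<subseteq> (\<Union>z\<in>Z. ball z (\<eta>/2))"
    using assms(1,3) unfolding compact_eq_totally_bounded by (meson half_gt_zero)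
  define rep where "rep z = (SOME S. S \<in> X \<and> \<Phi> S \<in> ball z (\<eta>/2))" for z
  define Z' where "Z' = {z\<in>Z. \<exists>S\<in>X. \<Phi> S \<in> ball z (\<eta>/2)}"
  have "\<bar>f S\<bar> \<le> (\<Sum>z\<in>Z'. \<bar>f (rep z)\<bar>) + e" if "S \<in> X" for S
  proof -
    obtain z where "z \<in> Z" "\<Phi> S \<in> ball z (\<eta>/2)" using cover assms(2) \<open>S \<in> X\<close> by blast
    then have "z \<in> Z'" using \<open>S \<in> X\<close> by (auto simp: Z'_def)
    then have "rep z \<in> X" "\<Phi> (rep z) \<in> ball z (\<eta>/2)"
      unfolding rep_def Z'_def by (metis (mono_tags, lifting) mem_Collect_eq someI_ex)+
    then have "dist (\<Phi> S) (\<Phi> (rep z)) < \<eta>"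
      using \<open>\<Phi> S \<in> ball z (\<eta>/2)\<close> dist_triangle3[of "\<Phi> S" "\<Phi> (rep z)" z] by simp
    then have "\<bar>f S\<bar> \<le> \<bar>f (rep z)\<bar> + e" using close[OF \<open>S \<in> X\<close> \<open>rep z \<in> X\<close>] by linarith
    moreover have "\<bar>f (rep z)\<bar> \<le> (\<Sum>z\<in>Z'. \<bar>f (rep z)\<bar>)"
      using \<open>z \<in> Z'\<close> \<open>finite Z\<close> by (intro member_le_sum) (auto simp: Z'_def)
    ultimately show ?thesis by linarith
  qed
  then show ?thesis using that by blast
qed

lemma continuous_approx_through_compact:
  fixes \<Phi> :: "'s \<Rightarrow> 'v::metric_space" and f :: "'s \<Rightarrow> real"
  assumes "compact C" "\<Phi> ` X \<subseteq> C" "\<eta> > 0"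
    and close: "\<And>S S'. S \<in> X \<Longrightarrow> S' \<in> X \<Longrightarrow> dist (\<Phi> S) (\<Phi> S') < \<eta> \<Longrightarrow> \<bar>f S - f S'\<bar> \<le> e"
  obtains \<gamma> where "continuous_on UNIV \<gamma>" "\<forall>S\<in>X. \<bar>f S - \<gamma> (\<Phi> S)\<bar> \<le> e"
proof (cases "X = {}")
  case True
  then show ?thesis using that[of "\<lambda>_. 0"] by simp
next
  case False
  obtain B where B: "\<forall>S\<in>X. \<bar>f S\<bar> \<le> B"
    using bounded_if_close_through_compact[where f = f and e = e, OF assms] by blast
  then have "B \<ge> 0" using False by force
  have "bdd_below (f ` X)" using B by (intro bdd_belowI2[of _ "- B"]) force
  then have "continuous_on UNIV (mcshane_extension (2 * B / \<eta>) f \<Phi> X)"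
    using False \<open>B \<ge> 0\<close> \<open>\<eta> > 0\<close> by (intro lipschitz_on_continuous_on[OF mcshane_extension_lipschitz]) auto
  then show ?thesis
    using that mcshane_extension_approx[OF _ B \<open>\<eta> > 0\<close> close] by blast
qed

section \<open>Point cloud sequences\<close>

lemma SUP_INF_dist_le:
  fixes A B :: "'a::metric_space set"
  assumes "finite B" "A \<noteq> {}" "\<forall>a\<in>A. \<exists>b\<in>B. dist a b \<le> r"
  shows "(SUP a\<in>A. INF b\<in>B. dist a b) \<le> r"
proof (rule cSUP_least)
  fix a assume "a \<in> A"
  then obtain b where "b \<in> B" "dist a b \<le> r" using assms(3) by blast
  moreover have "(INF b\<in>B. dist a b) \<le> dist a b"
    using \<open>b \<in> B\<close> \<open>finite B\<close> by (intro cINF_lower) auto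
  ultimately show "(INF b\<in>B. dist a b) \<le> r" by linarith
qed (use assms in auto)

lemma near_via_net:
  fixes A B G :: "'a::metric_space set"
  assumes "A \<subseteq> U" "\<forall>x\<in>U. \<exists>c\<in>G. dist x c \<le> h"
    and "\<forall>c\<in>G. (\<exists>x\<in>A. dist x c \<le> h) \<longrightarrow> (\<exists>y\<in>B. dist y c \<le> r)"
  shows "\<forall>a\<in>A. \<exists>b\<in>B. dist a b \<le> h + r"
proof
  fix a assume "a \<in> A"
  then obtain c where "c \<in> G" "dist a c \<le> h" using assms(1,2) by blast
  then obtain b where "b \<in> B" "dist b c \<le> r" using assms(3) \<open>a \<in> A\<close> by blast
  moreover have "dist a b \<le> h + r"
    using dist_triangle2[of a b c] \<open>dist a c \<le> h\<close> \<open>dist b c \<le> r\<close> by linarith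
  ultimately show "\<exists>b\<in>B. dist a b \<le> h + r" by blast
qed

lemma hausdorff_dist_le:
  fixes A B :: "(real ^ 'm) set"
  assumes "finite A" "finite B" "A \<noteq> {}" "B \<noteq> {}"
    and "\<forall>a\<in>A. \<exists>b\<in>B. dist a b \<le> r" "\<forall>b\<in>B. \<exists>a\<in>A. dist b a \<le> r"
  shows "hausdorff_dist A B \<le> r"
proof -
  have "(SUP b\<in>B. INF a\<in>A. dist a b) = (SUP b\<in>B. INF a\<in>A. dist b a)"
    by (simp add: dist_commute)
  then show ?thesis
    using SUP_INF_dist_le[of B A r] SUP_INF_dist_le[of A B r] assms
    unfolding hausdorff_dist_def by simp
qed

lemma pc_seqs_frame:
  assumes "S \<in> pc_seqs n T" "n > 0" "t \<in> {1..T}"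
  shows "finite (S t)" "S t \<noteq> {}" "S t \<subseteq> unit_cube"
proof -
  have "S t \<subseteq> unit_cube" "card (S t) = n" using assms unfolding pc_seqs_def by auto
  moreover have "finite (S t) \<and> S t \<noteq> {}"
    using \<open>card (S t) = n\<close> \<open>n > 0\<close> card_gt_0_iff by metis
  ultimately show "finite (S t)" "S t \<noteq> {}" "S t \<subseteq> unit_cube" by auto
qed

lemma pc_seqs_frames_finite_nonempty:
  assumes "S \<in> pc_seqs n T" "n > 0" "T > 0"
  shows "\<forall>t\<in>{1..T}. finite (S t)" "\<exists>t\<in>{1..T}. S t \<noteq> {}"
proof -
  show "\<forall>t\<in>{1..T}. finite (S t)" using pc_seqs_frame(1)[OF assms(1,2)] by blast
  have "1 \<in> {1..T}" using \<open>T > 0\<close> by simp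
  then show "\<exists>t\<in>{1..T}. S t \<noteq> {}" using pc_seqs_frame(2)[OF assms(1,2)] by blast
qed

lemma d_seq_le:
  assumes "S \<in> pc_seqs n T" "S' \<in> pc_seqs n T" "n > 0" "T > 0"
    and "\<forall>t\<in>{1..T}. \<forall>a\<in>S t. \<exists>b\<in>S' t. dist a b \<le> r"
    and "\<forall>t\<in>{1..T}. \<forall>b\<in>S' t. \<exists>a\<in>S t. dist b a \<le> r"
  shows "d_seq T S S' \<le> r"
  unfolding d_seq_def
proof (rule Max.boundedI)
  show "(\<lambda>t. hausdorff_dist (S t) (S' t)) ` {1..T} \<noteq> {}" using \<open>T > 0\<close> by simp
  fix d assume "d \<in> (\<lambda>t. hausdorff_dist (S t) (S' t)) ` {1..T}"
  then obtain t where t: "t \<in> {1..T}" "d = hausdorff_dist (S t) (S' t)" by blast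
  have "hausdorff_dist (S t) (S' t) \<le> r"
    using pc_seqs_frame[OF assms(1,3) t(1)] pc_seqs_frame[OF assms(2,3) t(1)] assms(5,6) t(1)
    by (intro hausdorff_dist_le) blast+
  then show "d \<le> r" using t(2) by simp
qed simp

lemma unit_cube_finite_net:
  assumes "h > 0"
  obtains G :: "(real ^ 'm) set"
  where "finite G" "G \<noteq> {}" "\<forall>x\<in>unit_cube. \<exists>c\<in>G. dist x c \<le> h"
proof -
  have cube: "unit_cube = cbox 0 (1 :: real ^ 'm)"
    by (auto simp: unit_cube_def mem_box_cart)
  have "compact (unit_cube :: (real ^ 'm) set)" unfolding cube by (rule compact_cbox)
  then obtain G :: "(real ^ 'm) set" where G: "finite G" "unit_cube \<subseteq> (\<Union>c\<in>G. ball c h)"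
    using assms unfolding compact_eq_totally_bounded by blast
  have net: "\<forall>x\<in>unit_cube. \<exists>c\<in>G. dist x c \<le> h"
  proof
    fix x :: "real ^ 'm" assume "x \<in> unit_cube"
    then obtain c where "c \<in> G" "dist c x < h" using G(2) by (auto simp only: mem_ball)
    then show "\<exists>c\<in>G. dist x c \<le> h" by (metis dist_commute less_imp_le)
  qed
  have "(0 :: real ^ 'm) \<in> unit_cube" by (simp add: unit_cube_def)
  then have "G \<noteq> {}" using G(2) by blast
  then show ?thesis using that G(1) net by blast
qed

lemma MAX_feat_values_finite:
  fixes \<zeta> :: "real ^ 'm \<Rightarrow> nat \<Rightarrow> nat \<Rightarrow> real" and T k :: nat
  assumes "\<forall>t\<in>{1..T}. finite (S t)"
  shows "finite {\<zeta> x t k | x t. t \<in> {1..T} \<and> x \<in> S t}"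
proof -
  have "{\<zeta> x t k | x t. t \<in> {1..T} \<and> x \<in> S t} = (\<Union>t\<in>{1..T}. (\<lambda>x. \<zeta> x t k) ` S t)"
    by blast
  then show ?thesis using assms by simp
qed

lemma MAX_feat_ge:
  assumes "\<forall>t\<in>{1..T}. finite (S t)" "k < K" "t \<in> {1..T}" "x \<in> S t"
  shows "\<zeta> x t k \<le> MAX_feat K T \<zeta> S k"
proof -
  have "\<zeta> x t k \<in> {\<zeta> x t k | x t. t \<in> {1..T} \<and> x \<in> S t}" using assms(3,4) by blast
  then have "\<zeta> x t k \<le> Max {\<zeta> x t k | x t. t \<in> {1..T} \<and> x \<in> S t}"
    by (rule Max_ge[OF MAX_feat_values_finite[OF assms(1)]])
  then show ?thesis using \<open>k < K\<close> by (simp add: MAX_feat_def)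
qed

lemma MAX_feat_attained:
  assumes "\<forall>t\<in>{1..T}. finite (S t)" "\<exists>t\<in>{1..T}. S t \<noteq> {}" "k < K"
  shows "\<exists>t\<in>{1..T}. \<exists>x\<in>S t. MAX_feat K T \<zeta> S k = \<zeta> x t k"
proof -
  define M where "M = {\<zeta> x t k | x t. t \<in> {1..T} \<and> x \<in> S t}"
  have "finite M" unfolding M_def by (rule MAX_feat_values_finite[OF assms(1)])
  moreover have "M \<noteq> {}" using assms(2) unfolding M_def by blast
  ultimately have "Max M \<in> M" by (rule Max_in)
  then obtain t x where "t \<in> {1..T}" "x \<in> S t" "Max M = \<zeta> x t k" unfolding M_def by blast
  moreover have "MAX_feat K T \<zeta> S k = Max M" using \<open>k < K\<close> by (simp add: MAX_feat_def M_def)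
  ultimately show ?thesis by metis
qed

section \<open>Grid features\<close>

text \<open>\<open>e\<close> enumerates the pairs \<open>(c, t)\<close> of a net point and a frame.\<close>
definition grid_feature :: "(nat \<Rightarrow> (real ^ 'm) \<times> nat) \<Rightarrow> real ^ 'm \<Rightarrow> nat \<Rightarrow> nat \<Rightarrow> real" where
  "grid_feature e x t k = (if snd (e k) = t then - min (dist x (fst (e k))) 1 else - 1)"

lemma continuous_on_grid_feature: "continuous_on U (\<lambda>x. grid_feature e x t)"
proof (intro continuous_on_coordinatewise_then_product)
  fix k
  show "continuous_on U (\<lambda>x. grid_feature e x t k)"
    unfolding grid_feature_def by (cases "snd (e k) = t") (auto intro!: continuous_intros)
qed

lemma MAX_grid_feature_in_cube:
  assumes "\<forall>t\<in>{1..T}. finite (S t)" "\<exists>t\<in>{1..T}. S t \<noteq> {}"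
  shows "MAX_feat K T (grid_feature e) S \<in> (\<Pi>\<^sub>E k\<in>UNIV. if k < K then {-1..0} else {0})"
proof -
  have "MAX_feat K T (grid_feature e) S k \<in> {-1..0}" if "k < K" for k
    using MAX_feat_attained[OF assms that, of "grid_feature e"]
    by (auto simp: grid_feature_def)
  then show ?thesis by (auto simp: MAX_feat_def)
qed

lemma compact_feature_cube: "compact (\<Pi>\<^sub>E k\<in>UNIV. if k < K then {-1..0} else {0::real})"
proof -
  have "compactin (product_topology (\<lambda>_. euclidean) UNIV)
          (\<Pi>\<^sub>E k\<in>UNIV. if k < K then {-1..0} else {0::real})"
    by (simp add: compactin_PiE)
  then show ?thesis by (simp add: euclidean_product_topology)
qed

lemma net_point_near_if_grid_feature_close:
  assumes "\<forall>t\<in>{1..T}. finite (S t)" "\<forall>t\<in>{1..T}. finite (S' t)" "\<exists>t\<in>{1..T}. S' t \<noteq> {}"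
    and "k < K" "e k = (c, t)" "t \<in> {1..T}" "x \<in> S t" "dist x c \<le> r" "r + h < 1"
    and close: "\<bar>MAX_feat K T (grid_feature e) S k - MAX_feat K T (grid_feature e) S' k\<bar> \<le> h"
  shows "\<exists>y\<in>S' t. dist y c \<le> r + h"
proof -
  have "- r \<le> MAX_feat K T (grid_feature e) S k"
    using MAX_feat_ge[OF assms(1,4,6,7), of "grid_feature e"] assms(5,8)
    by (auto simp: grid_feature_def)
  then have ge: "- r - h \<le> MAX_feat K T (grid_feature e) S' k" using close by linarith
  obtain t' y where "t' \<in> {1..T}" "y \<in> S' t'" and y: "MAX_feat K T (grid_feature e) S' k = grid_feature e y t' k"
    using MAX_feat_attained[OF assms(2,3,4)] by blast
  moreover have "t' = t" using ge y \<open>r + h < 1\<close> assms(5) by (auto simp: grid_feature_def split: if_splits)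
  moreover have "dist y c \<le> r + h" using ge y \<open>r + h < 1\<close> assms(5) \<open>t' = t\<close>
    by (auto simp: grid_feature_def min_def split: if_splits)
  ultimately show ?thesis by blast
qed

lemma frame_near_if_grid_features_close:
  assumes net: "\<forall>x\<in>unit_cube. \<exists>c\<in>G. dist x c \<le> h"
    and enum: "G \<times> {1..T} \<subseteq> e ` {..<K}"
    and "A \<in> pc_seqs n T" "B \<in> pc_seqs n T" "n > 0" "t \<in> {1..T}" "h + h < 1"
    and close: "\<forall>k<K. \<bar>MAX_feat K T (grid_feature e) A k - MAX_feat K T (grid_feature e) B k\<bar> \<le> h"
  shows "\<forall>a\<in>A t. \<exists>b\<in>B t. dist a b \<le> h + (h + h)"
proof (rule near_via_net[OF _ net])
  show "A t \<subseteq> unit_cube" using pc_seqs_frame(3)[OF assms(3,5,6)] .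
  have "T > 0" using \<open>t \<in> {1..T}\<close> by simp
  note frames_A = pc_seqs_frames_finite_nonempty[OF assms(3,5) \<open>T > 0\<close>]
  note frames_B = pc_seqs_frames_finite_nonempty[OF assms(4,5) \<open>T > 0\<close>]
  show "\<forall>c\<in>G. (\<exists>x\<in>A t. dist x c \<le> h) \<longrightarrow> (\<exists>y\<in>B t. dist y c \<le> h + h)"
  proof (intro ballI impI)
    fix c assume "c \<in> G" and "\<exists>x\<in>A t. dist x c \<le> h"
    then obtain x where "x \<in> A t" "dist x c \<le> h" by blast
    have "(c, t) \<in> e ` {..<K}" using enum \<open>c \<in> G\<close> \<open>t \<in> {1..T}\<close> by blast
    then obtain k where "k < K" "e k = (c, t)" by (metis imageE lessThan_iff)
    show "\<exists>y\<in>B t. dist y c \<le> h + h"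
      by (rule net_point_near_if_grid_feature_close[OF frames_A(1) frames_B \<open>k < K\<close> \<open>e k = (c, t)\<close>
            \<open>t \<in> {1..T}\<close> \<open>x \<in> A t\<close> \<open>dist x c \<le> h\<close> \<open>h + h < 1\<close> close[rule_format, OF \<open>k < K\<close>]])
  qed
qed

lemma d_seq_le_if_grid_features_close:
  assumes "\<forall>x\<in>unit_cube. \<exists>c\<in>G. dist x c \<le> h" "G \<times> {1..T} \<subseteq> e ` {..<K}"
    and "S \<in> pc_seqs n T" "S' \<in> pc_seqs n T" "n > 0" "T > 0" "h + h < 1"
    and close: "\<forall>k<K. \<bar>MAX_feat K T (grid_feature e) S k - MAX_feat K T (grid_feature e) S' k\<bar> \<le> h"
  shows "d_seq T S S' \<le> h + (h + h)"
proof (rule d_seq_le[OF assms(3-6)])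
  have close': "\<forall>k<K. \<bar>MAX_feat K T (grid_feature e) S' k - MAX_feat K T (grid_feature e) S k\<bar> \<le> h"
    using close by (simp add: abs_minus_commute)
  show "\<forall>t\<in>{1..T}. \<forall>a\<in>S t. \<exists>b\<in>S' t. dist a b \<le> h + (h + h)"
    using frame_near_if_grid_features_close[OF assms(1,2,3,4,5) _ assms(7) close] by blast
  show "\<forall>t\<in>{1..T}. \<forall>b\<in>S' t. \<exists>a\<in>S t. dist b a \<le> h + (h + h)"
    using frame_near_if_grid_features_close[OF assms(1,2,4,3,5) _ assms(7) close'] by blast
qed

lemma grid_feature_encoding:
  assumes "n > 0" "T > 0" "r > 0"
  obtains K \<eta> and e :: "nat \<Rightarrow> (real ^ 'm) \<times> nat" where "K > 0" "\<eta> > 0"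
    "MAX_feat K T (grid_feature e) ` pc_seqs n T \<subseteq> (\<Pi>\<^sub>E k\<in>UNIV. if k < K then {-1..0} else {0})"
    "\<And>S S'. S \<in> pc_seqs n T \<Longrightarrow> S' \<in> pc_seqs n T \<Longrightarrow>
      dist (MAX_feat K T (grid_feature e) S) (MAX_feat K T (grid_feature e) S') < \<eta> \<Longrightarrow> d_seq T S S' < r"
proof -
  define h where "h = min (r / 4) (1 / 4)"
  have "h > 0" "h + (h + h) < r" "h + h < 1" using \<open>r > 0\<close> by (auto simp: h_def)
  obtain G :: "(real ^ 'm) set" where "finite G" "G \<noteq> {}" and net: "\<forall>x\<in>unit_cube. \<exists>c\<in>G. dist x c \<le> h"
    using unit_cube_finite_net[OF \<open>h > 0\<close>] by blast
  define K where "K = card (G \<times> {1..T})"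
  have "K > 0" using \<open>finite G\<close> \<open>G \<noteq> {}\<close> \<open>T > 0\<close> by (simp add: K_def card_gt_0_iff)
  obtain e where "bij_betw e {0..<K} (G \<times> {1..T})"
    using ex_bij_betw_nat_finite[of "G \<times> {1..T}"] \<open>finite G\<close> unfolding K_def by blast
  then have enum: "G \<times> {1..T} \<subseteq> e ` {..<K}" by (simp add: bij_betw_def atLeast0LessThan)
  obtain \<eta> where "\<eta> > 0"
    and coords: "\<And>v w :: nat \<Rightarrow> real. \<And>k. dist v w < \<eta> \<Longrightarrow> k \<in> {..<K} \<Longrightarrow> dist (v k) (w k) < h"
    by (rule dist_fun_small_imp_coordinates_small[of "{..<K}" h]) (use \<open>h > 0\<close> \<open>h + h < 1\<close> in auto)
  have encode: "d_seq T S S' < r"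
    if "S \<in> pc_seqs n T" "S' \<in> pc_seqs n T"
      and "dist (MAX_feat K T (grid_feature e) S) (MAX_feat K T (grid_feature e) S') < \<eta>" for S S'
  proof -
    have "d_seq T S S' \<le> h + (h + h)"
      using coords[OF that(3)] unfolding dist_real_def
      by (intro d_seq_le_if_grid_features_close[OF net enum that(1,2) \<open>n > 0\<close> \<open>T > 0\<close> \<open>h + h < 1\<close>])
        (simp add: less_imp_le)
    then show ?thesis using \<open>h + (h + h) < r\<close> by linarith
  qed
  have range: "MAX_feat K T (grid_feature e) ` pc_seqs n T
      \<subseteq> (\<Pi>\<^sub>E k\<in>UNIV. if k < K then {-1..0} else {0})"
  proof (rule image_subsetI)
    fix S :: "nat \<Rightarrow> (real ^ 'm) set" assume "S \<in> pc_seqs n T"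
    from pc_seqs_frames_finite_nonempty[OF this \<open>n > 0\<close> \<open>T > 0\<close>]
    show "MAX_feat K T (grid_feature e) S \<in> (\<Pi>\<^sub>E k\<in>UNIV. if k < K then {-1..0} else {0})"
      by (rule MAX_grid_feature_in_cube)
  qed
  show ?thesis by (rule that[OF \<open>K > 0\<close> \<open>\<eta> > 0\<close> range encode])
qed

theorem theorem1:
  fixes n T :: nat and f :: "(nat \<Rightarrow> (real ^ 'm) set) \<Rightarrow> real"
  assumes "n > 0" and "T > 0"
    and f_cont: "\<forall>\<epsilon>>0. \<exists>\<delta>>0. \<forall>S\<in>pc_seqs n T. \<forall>S'\<in>pc_seqs n T.
                   d_seq T S S' < \<delta> \<longrightarrow> \<bar>f S - f S'\<bar> < \<epsilon>"
    and "\<epsilon> > 0"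
  shows "\<exists>K::nat. K > 0 \<and>
           (\<exists>(\<zeta> :: real ^ 'm \<Rightarrow> nat \<Rightarrow> (nat \<Rightarrow> real)) (\<gamma> :: (nat \<Rightarrow> real) \<Rightarrow> real).
              (\<forall>t\<in>{1..T}. continuous_on unit_cube (\<lambda>x. \<zeta> x t)) \<and>
              continuous_on {v. \<forall>k\<ge>K. v k = 0} \<gamma> \<and>
              (\<forall>S\<in>pc_seqs n T. \<bar>f S - \<gamma> (MAX_feat K T \<zeta> S)\<bar> < \<epsilon>))"
proof -
  obtain \<delta> where "\<delta> > 0" and f_close: "\<forall>S\<in>pc_seqs n T. \<forall>S'\<in>pc_seqs n T.
      d_seq T S S' < \<delta> \<longrightarrow> \<bar>f S - f S'\<bar> < \<epsilon> / 2"
    using f_cont \<open>\<epsilon> > 0\<close> by (meson half_gt_zero)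
  obtain K \<eta> and e :: "nat \<Rightarrow> (real ^ 'm) \<times> nat" where "K > 0" "\<eta> > 0" and range: "MAX_feat K T (grid_feature e) ` pc_seqs n T
      \<subseteq> (\<Pi>\<^sub>E k\<in>UNIV. if k < K then {-1..0} else {0})"
    and encode: "\<And>S S'. S \<in> pc_seqs n T \<Longrightarrow> S' \<in> pc_seqs n T \<Longrightarrow>
      dist (MAX_feat K T (grid_feature e) S) (MAX_feat K T (grid_feature e) S') < \<eta> \<Longrightarrow> d_seq T S S' < \<delta>"
    using grid_feature_encoding[OF \<open>n > 0\<close> \<open>T > 0\<close> \<open>\<delta> > 0\<close>] by blast
  have f_close_features: "\<bar>f S - f S'\<bar> \<le> \<epsilon> / 2"
    if "S \<in> pc_seqs n T" "S' \<in> pc_seqs n T"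
      and "dist (MAX_feat K T (grid_feature e) S) (MAX_feat K T (grid_feature e) S') < \<eta>" for S S'
    using f_close encode[OF that] that(1,2) by (meson less_imp_le)
  obtain \<gamma> where \<gamma>_cont: "continuous_on UNIV \<gamma>"
    and approx: "\<forall>S\<in>pc_seqs n T. \<bar>f S - \<gamma> (MAX_feat K T (grid_feature e) S)\<bar> \<le> \<epsilon> / 2"
    by (rule continuous_approx_through_compact[OF compact_feature_cube range \<open>\<eta> > 0\<close> f_close_features])
  have "continuous_on {v. \<forall>k\<ge>K. v k = 0} \<gamma>" using \<gamma>_cont by (rule continuous_on_subset) simp
  moreover have "\<forall>S\<in>pc_seqs n T. \<bar>f S - \<gamma> (MAX_feat K T (grid_feature e) S)\<bar> < \<epsilon>"
  proof
    fix S :: "nat \<Rightarrow> (real ^ 'm) set" assume "S \<in> pc_seqs n T"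
    with approx have "\<bar>f S - \<gamma> (MAX_feat K T (grid_feature e) S)\<bar> \<le> \<epsilon> / 2" by blast
    with \<open>\<epsilon> > 0\<close> show "\<bar>f S - \<gamma> (MAX_feat K T (grid_feature e) S)\<bar> < \<epsilon>" by linarith
  qed
  moreover have "\<forall>t\<in>{1..T}. continuous_on unit_cube (\<lambda>x. grid_feature e x t)"
    by (simp add: continuous_on_grid_feature)
  ultimately show ?thesis
    by (intro exI[of _ K] conjI[OF \<open>K > 0\<close>] exI[of _ "grid_feature e"] exI[of _ \<gamma>]) simp
qed

end
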